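(* With the notation and hypotheses of the uniform case (continuous $V_a$ with $0<V_a^{min}\le V_a\le V_a^{max}$, $\hat V_a=V_a/V_a^*$, delays $\tau_{min}(t),\tau_{max}(t)$ defined by $\mathcal{T}\mp V_a^*\delta=\int_{t-\tau_{min/max}(t)}^tV_a(s)ds$, and $A_U(t)=\frac1{2\delta}\int_{\tau_{min}(t)}^{\tau_{max}(t)}\frac{\beta x(t-\phi)}{\hat V_a(t-\phi)}e^{-\int_{t-\phi}^t\mu(x(s))ds}d\phi$), consider the uniformly distributed DDE $$\frac{d}{dt}x(t)=F(x(t),A_U(t)V_a(t))-\gamma(x(t))x(t),\quad t>t_0;\qquad x(s)=\rho(s),\ s\le t_0, \tag{U}$$ and the two-delay system $$\frac{d}{dt}x(t)=F(x(t),y(t)V_a(t))-\gamma(x(t))x(t),$$ $$\frac{d}{dt}y(t)=\frac1{2\delta}\Big[\frac{\beta x(t-\tau_{min}(t))}{\hat V_a(t-\tau_{min}(t))}e^{-\int_{t-\tau_{min}(t)}^t\mu(x(s))ds}\frac{V_a(t)}{V_a(t-\tau_{min}(t))}-\frac{\beta x(t-\tau_{max}(t))}{\hat V_a(t-\tau_{max}(t))}e^{-\int_{t-\tau_{max}(t)}^t\mu(x(s))ds}\frac{V_a(t)}{V_a(t-\tau_{max}(t))}\Big]-\mu(x(t))y(t). \tag{D}$$ (i) If $x$ solves (U) with history $\rho$, then $(x,y)$ with $y=A_U$ solves (D) with history $x(s)=\rho(s)$ and initial value $y(t_0)=\frac1{2\delta}\int_{\tau_{min}(t_0)}^{\tau_{max}(t_0)}\frac{\beta\rho(t_0-\phi)}{\hat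 V_a(t_0-\phi)}e^{-\int_{t_0-\phi}^{t_0}\mu(\rho(s))ds}d\phi$. (ii) A solution $(x,y)$ of (D) with history $x(s)=\eta(s)$, $s\le t_0$, gives a solution $x$ of (U) with history $\eta$ (with $y=A_U$) if and only if $y(t_0)=\frac1{2\delta}\int_{\tau_{min}(t_0)}^{\tau_{max}(t_0)}\frac{\beta\eta(t_0-\phi)}{\hat V_a(t_0-\phi)}e^{-\int_{t_0-\phi}^{t_0}\mu(\eta(s))ds}d\phi$.
   Context: $F$ is the influx function, $\gamma$ the clearance rate, $\mu$ the immature death rate, $\beta>0$, $\delta>0$, $\mathcal{T}>V_a^*\delta$ the mean maturation age. *)

theory Defs
  imports "HOL-Analysis.Analysis"
begin

definition hatV :: "(real \<Rightarrow> real) \<Rightarrow> real \<Rightarrow> real \<Rightarrow> real" where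
  "hatV Va Vs t = Va t / Vs"

definition AU :: "real \<Rightarrow> real \<Rightarrow> real \<Rightarrow> (real \<Rightarrow> real) \<Rightarrow> (real \<Rightarrow> real)
   \<Rightarrow> (real \<Rightarrow> real) \<Rightarrow> (real \<Rightarrow> real) \<Rightarrow> (real \<Rightarrow> real) \<Rightarrow> real \<Rightarrow> real" where
  "AU \<beta> \<delta> Vs Va \<mu> tmin tmax x t =
     (1 / (2 * \<delta>)) * integral {tmin t .. tmax t}
       (\<lambda>\<phi>. \<beta> * x (t - \<phi>) / hatV Va Vs (t - \<phi>)
              * exp (- integral {t - \<phi> .. t} (\<lambda>s. \<mu> (x s))))"

definition solves_U :: "(real \<Rightarrow> real \<Rightarrow> real) \<Rightarrow> (real \<Rightarrow> real) \<Rightarrow> (real \<Rightarrow> real)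
   \<Rightarrow> real \<Rightarrow> real \<Rightarrow> real \<Rightarrow> (real \<Rightarrow> real) \<Rightarrow> (real \<Rightarrow> real) \<Rightarrow> (real \<Rightarrow> real)
   \<Rightarrow> real \<Rightarrow> (real \<Rightarrow> real) \<Rightarrow> (real \<Rightarrow> real) \<Rightarrow> bool" where
  "solves_U F \<gamma> \<mu> \<beta> \<delta> Vs Va tmin tmax t0 \<rho> x \<longleftrightarrow>
     continuous_on UNIV x \<and>
     (\<forall>s\<le>t0. x s = \<rho> s) \<and>
     (\<forall>t>t0. (x has_real_derivative
          (F (x t) (AU \<beta> \<delta> Vs Va \<mu> tmin tmax x t * Va t) - \<gamma> (x t) * x t)) (at t))"

definition solves_D :: "(real \<Rightarrow> real \<Rightarrow> real) \<Rightarrow> (real \<Rightarrow> real) \<Rightarrow> (real \<Rightarrow> real)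
   \<Rightarrow> real \<Rightarrow> real \<Rightarrow> real \<Rightarrow> (real \<Rightarrow> real) \<Rightarrow> (real \<Rightarrow> real) \<Rightarrow> (real \<Rightarrow> real)
   \<Rightarrow> real \<Rightarrow> (real \<Rightarrow> real) \<Rightarrow> (real \<Rightarrow> real) \<Rightarrow> (real \<Rightarrow> real) \<Rightarrow> bool" where
  "solves_D F \<gamma> \<mu> \<beta> \<delta> Vs Va tmin tmax t0 \<eta> x y \<longleftrightarrow>
     continuous_on UNIV x \<and> continuous_on {t0..} y \<and>
     (\<forall>s\<le>t0. x s = \<eta> s) \<and>
     (\<forall>t>t0.
        (x has_real_derivative (F (x t) (y t * Va t) - \<gamma> (x t) * x t)) (at t) \<and>
        (y has_real_derivative
          ((1 / (2 * \<delta>)) *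
             (\<beta> * x (t - tmin t) / hatV Va Vs (t - tmin t)
                * exp (- integral {t - tmin t .. t} (\<lambda>s. \<mu> (x s)))
                * (Va t / Va (t - tmin t))
            - \<beta> * x (t - tmax t) / hatV Va Vs (t - tmax t)
                * exp (- integral {t - tmax t .. t} (\<lambda>s. \<mu> (x s)))
                * (Va t / Va (t - tmax t)))
           - \<mu> (x t) * y t)) (at t))"

end

theory Submission
  imports Defs
begin

text \<open>With \<open>M' = \<mu> \<circ> x\<close> and \<open>K' = (\<beta> x / hatV) e\<^sup>M\<close>, the survival factor splits as
  \<open>e\<^bsup>-M(t)\<^esup> e\<^bsup>M(t-\<phi>)\<^esup>\<close>, so
  \<open>A\<^sub>U(t) = e\<^bsup>-M(t)\<^esup> (K(t - \<tau>\<^sub>m\<^sub>i\<^sub>n(t)) - K(t - \<tau>\<^sub>m\<^sub>a\<^sub>x(t))) / (2\<delta>)\<close>.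
  Since \<open>\<integral>\<^bsub>t-\<tau>(t)\<^esub>\<^sup>t V\<^sub>a\<close> is constant, each delayed time \<open>t - \<tau>(t)\<close> is differentiable with derivative
  \<open>V\<^sub>a(t) / V\<^sub>a(t - \<tau>(t))\<close>, and differentiating the closed form gives exactly the \<open>y\<close>-equation of (D).
  So \<open>A\<^sub>U\<close> solves that linear equation along every continuous \<open>x\<close>, and by the integrating factor
  \<open>e\<^sup>M\<close> any other solution agrees with it on \<open>[t\<^sub>0, \<infinity>)\<close> iff the values at \<open>t\<^sub>0\<close> agree.\<close>

lemma continuous_on_UNIV_antiderivative:
  fixes f :: "real \<Rightarrow> real"
  assumes "continuous_on UNIV f"
  obtains F where "\<And>t. (F has_real_derivative f t) (at t)"
proof -
  have "\<exists>F. \<forall>t::real. - \<infinity> < ereal t \<longrightarrow> ereal t < \<infinity> \<longrightarrow> (F has_vector_derivative f t) (at t)"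
    by (rule einterval_antiderivative) (use assms in \<open>auto simp: continuous_on_eq_continuous_at\<close>)
  then show ?thesis
    using that by (auto simp: has_real_derivative_iff_has_vector_derivative)
qed

lemma integral_eq_antiderivative_diff:
  fixes F f :: "real \<Rightarrow> real"
  assumes "\<And>t. (F has_real_derivative f t) (at t)" and "a \<le> b"
  shows "integral {a..b} f = F b - F a"
proof (rule integral_unique, rule fundamental_theorem_of_calculus[OF \<open>a \<le> b\<close>])
  show "\<And>t. t \<in> {a..b} \<Longrightarrow> (F has_vector_derivative f t) (at t within {a..b})"
    using assms(1) by (auto simp: has_real_derivative_iff_has_vector_derivative[symmetric]
        intro: has_field_derivative_at_within)
qed

lemma surj_if_derivative_ge_pos:
  fixes G V :: "real \<Rightarrow> real"
  assumes G: "\<And>t. (G has_real_derivative V t) (at t)"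
    and V_ge: "\<And>t. c \<le> V t" and c_pos: "0 < c"
  shows "surj G"
proof -
  have linear_growth: "G a - c * a \<le> G b - c * b" if "a \<le> b" for a b
    by (rule DERIV_nonneg_imp_nondecreasing[OF that])
       (use G V_ge in \<open>auto intro!: exI[of _ "V _ - c"] derivative_eq_intros\<close>)
  have cont: "isCont G z" for z
    using G by (rule DERIV_isCont)
  have "\<exists>z. G z = y" for y
  proof -
    define b where "b = (y - G 0) / c"
    show ?thesis
    proof (cases "G 0 \<le> y")
      case True
      then have "0 \<le> b" and "y \<le> G b"
        using linear_growth[of 0 b] c_pos by (auto simp: b_def field_simps)
      then show ?thesis using IVT[of G 0 y b] True cont by blast
    next
      case False
      then have "b \<le> 0" and "G b \<le> y"
        using linear_growth[of b 0] c_pos by (auto simp: b_def field_simps divide_le_0_iff)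
      then show ?thesis using IVT[of G b y 0] False cont by force
    qed
  qed
  then show ?thesis by (metis surjI)
qed

text \<open>With \<open>G' = V\<close>, the lag satisfies \<open>s - \<tau> s = G\<^sup>-\<^sup>1 (G s - C)\<close>.\<close>

lemma lag_has_real_derivative:
  fixes V \<tau> :: "real \<Rightarrow> real"
  assumes V_cont: "continuous_on UNIV V" and V_ge: "\<And>s. c \<le> V s" and c_pos: "0 < c"
    and \<tau>_nonneg: "\<And>s. 0 \<le> \<tau> s" and lag: "\<And>s. integral {s - \<tau> s..s} V = C"
  shows "((\<lambda>s. s - \<tau> s) has_real_derivative V t / V (t - \<tau> t)) (at t)"
proof -
  have V_pos: "V s > 0" for s
    using V_ge[of s] c_pos by linarith
  obtain G where G: "\<And>s. (G has_real_derivative V s) (at s)"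
    using continuous_on_UNIV_antiderivative[OF V_cont] by blast
  have G_lag: "G (s - \<tau> s) = G s - C" for s
    using lag[of s] integral_eq_antiderivative_diff[OF G, of "s - \<tau> s" s] \<tau>_nonneg[of s] by simp
  have G_cont: "isCont G s" for s
    using G by (rule DERIV_isCont)
  have "strict_mono G"
    using DERIV_pos_imp_increasing G V_pos by (metis strict_monoI)
  then have inj: "inj G"
    by (rule strict_mono_imp_inj_on)
  define v where "v = inv G"
  have Gv: "G (v y) = y" for y
    unfolding v_def using surj_if_derivative_ge_pos[OF G V_ge c_pos] by (simp add: surj_f_inv_f)
  have vG: "v (G z) = z" for z
    unfolding v_def using inj by simp
  have v_cont: "isCont v y" for y
  proof -
    have "isCont v (G (v y))"
      by (rule isCont_inverse_function[where f=G and g=v and d=1]) (use vG G_cont in auto)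
    then show ?thesis by (simp add: Gv)
  qed
  have dv: "(v has_real_derivative inverse (V (v y))) (at y)" for y
    by (rule DERIV_inverse_function[where a="y - 1" and b="y + 1"])
       (use G V_pos v_cont Gv in \<open>auto simp: less_imp_neq[symmetric]\<close>)
  have lag_eq: "(\<lambda>s. s - \<tau> s) = (\<lambda>s. v (G s - C))"
    by (rule ext) (metis G_lag vG)
  have "((\<lambda>s. v (G s - C)) has_real_derivative inverse (V (v (G t - C))) * V t) (at t)"
    by (rule DERIV_chain2[OF dv]) (use G in \<open>auto intro!: derivative_eq_intros\<close>)
  then show ?thesis
    unfolding lag_eq by (metis G_lag vG divide_inverse mult.commute)
qed

lemma lag_mono:
  fixes V :: "real \<Rightarrow> real"
  assumes V_cont: "continuous_on UNIV V" and V_pos: "\<And>s. 0 < V s"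
    and "0 \<le> \<tau>\<^sub>1" "0 \<le> \<tau>\<^sub>2"
    and less: "integral {t - \<tau>\<^sub>1..t} V < integral {t - \<tau>\<^sub>2..t} V"
  shows "\<tau>\<^sub>1 \<le> \<tau>\<^sub>2"
proof (rule ccontr)
  assume "\<not> \<tau>\<^sub>1 \<le> \<tau>\<^sub>2"
  obtain G where G: "\<And>s. (G has_real_derivative V s) (at s)"
    using continuous_on_UNIV_antiderivative[OF V_cont] by blast
  have "G (t - \<tau>\<^sub>1) \<le> G (t - \<tau>\<^sub>2)"
    by (rule DERIV_nonneg_imp_nondecreasing) (use \<open>\<not> \<tau>\<^sub>1 \<le> \<tau>\<^sub>2\<close> G V_pos in \<open>auto intro: less_imp_le\<close>)
  with less show False
    using integral_eq_antiderivative_diff[OF G] \<open>0 \<le> \<tau>\<^sub>1\<close> \<open>0 \<le> \<tau>\<^sub>2\<close> by simp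
qed

definition memory_integral :: "(real \<Rightarrow> real) \<Rightarrow> (real \<Rightarrow> real) \<Rightarrow> (real \<Rightarrow> real)
    \<Rightarrow> (real \<Rightarrow> real) \<Rightarrow> real \<Rightarrow> real" where
  "memory_integral g m a b t =
     integral {a t..b t} (\<lambda>\<phi>. g (t - \<phi>) * exp (- integral {t - \<phi>..t} m))"

lemma memory_integral_eq_antiderivatives:
  fixes g m M K :: "real \<Rightarrow> real"
  assumes M: "\<And>s. (M has_real_derivative m s) (at s)"
    and K: "\<And>s. (K has_real_derivative g s * exp (M s)) (at s)"
    and a_nonneg: "0 \<le> a t" and a_le_b: "a t \<le> b t"
  shows "memory_integral g m a b t = exp (- M t) * (K (t - a t) - K (t - b t))"
proof -
  have "memory_integral g m a b t = integral {a t..b t} (\<lambda>\<phi>. exp (- M t) * (g (t - \<phi>) * exp (M (t - \<phi>))))"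
    unfolding memory_integral_def
  proof (rule integral_cong)
    fix \<phi> assume "\<phi> \<in> {a t..b t}"
    then have "integral {t - \<phi>..t} m = M t - M (t - \<phi>)"
      using a_nonneg integral_eq_antiderivative_diff[OF M] by simp
    then show "g (t - \<phi>) * exp (- integral {t - \<phi>..t} m) = exp (- M t) * (g (t - \<phi>) * exp (M (t - \<phi>)))"
      by (simp add: exp_add[symmetric])
  qed
  also have "\<dots> = exp (- M t) * integral {a t..b t} (\<lambda>\<phi>. g (t - \<phi>) * exp (M (t - \<phi>)))"
    by simp
  also have "integral {a t..b t} (\<lambda>\<phi>. g (t - \<phi>) * exp (M (t - \<phi>))) = K (t - a t) - K (t - b t)"
  proof -
    have "((\<lambda>\<phi>. - K (t - \<phi>)) has_real_derivative g (t - \<phi>) * exp (M (t - \<phi>))) (at \<phi>)" for \<phi>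
    proof -
      have "((\<lambda>\<phi>. K (t - \<phi>)) has_real_derivative g (t - \<phi>) * exp (M (t - \<phi>)) * (- 1)) (at \<phi>)"
        by (rule DERIV_chain2[OF K]) (auto intro!: derivative_eq_intros)
      from DERIV_minus[OF this] show ?thesis by simp
    qed
    from integral_eq_antiderivative_diff[OF this a_le_b] show ?thesis by simp
  qed
  finally show ?thesis .
qed

lemma memory_integral_has_real_derivative:
  fixes g m a b :: "real \<Rightarrow> real"
  assumes g_cont: "continuous_on UNIV g" and m_cont: "continuous_on UNIV m"
    and ab: "\<And>s. 0 \<le> a s \<and> a s \<le> b s"
    and da: "((\<lambda>s. s - a s) has_real_derivative a') (at t)"
    and db: "((\<lambda>s. s - b s) has_real_derivative b') (at t)"
  shows "(memory_integral g m a b has_real_derivative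
            g (t - a t) * exp (- integral {t - a t..t} m) * a'
          - g (t - b t) * exp (- integral {t - b t..t} m) * b'
          - m t * memory_integral g m a b t) (at t)"
proof -
  obtain M where M: "\<And>s. (M has_real_derivative m s) (at s)"
    using continuous_on_UNIV_antiderivative[OF m_cont] by blast
  have M_cont: "continuous_on UNIV M"
    using M DERIV_isCont by (blast intro: continuous_at_imp_continuous_on)
  have "continuous_on UNIV (\<lambda>s. g s * exp (M s))"
    by (intro continuous_intros g_cont M_cont)
  then obtain K where K: "\<And>s. (K has_real_derivative g s * exp (M s)) (at s)"
    using continuous_on_UNIV_antiderivative by blast
  have survival: "exp (- integral {s..t} m) = exp (- M t) * exp (M s)" if "s \<le> t" for s
    using integral_eq_antiderivative_diff[OF M that] by (simp add: exp_add[symmetric])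
  have I_eq: "memory_integral g m a b = (\<lambda>s. exp (- M s) * (K (s - a s) - K (s - b s)))"
    using memory_integral_eq_antiderivatives[OF M K] ab by blast
  have dKa: "((\<lambda>s. K (s - a s)) has_real_derivative g (t - a t) * exp (M (t - a t)) * a') (at t)"
    by (rule DERIV_chain2[OF K da])
  have dKb: "((\<lambda>s. K (s - b s)) has_real_derivative g (t - b t) * exp (M (t - b t)) * b') (at t)"
    by (rule DERIV_chain2[OF K db])
  have dE: "((\<lambda>s. exp (- M s)) has_real_derivative exp (- M t) * (- m t)) (at t)"
    by (rule DERIV_chain2[OF DERIV_exp]) (use M in \<open>auto intro!: derivative_eq_intros\<close>)
  show ?thesis
    unfolding I_eq
    by (rule DERIV_cong[OF DERIV_mult[OF dE DERIV_diff[OF dKa dKb]]])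
       (use ab[of t] in \<open>simp add: survival algebra_simps\<close>)
qed

lemma linear_ode_solution_unique:
  fixes y z f m :: "real \<Rightarrow> real"
  assumes m_cont: "continuous_on UNIV m"
    and y: "\<And>s. t0 < s \<Longrightarrow> (y has_real_derivative f s - m s * y s) (at s)"
    and z: "\<And>s. t0 < s \<Longrightarrow> (z has_real_derivative f s - m s * z s) (at s)"
    and y_cont: "continuous_on {t0..} y" and z_cont: "continuous_on {t0..} z"
    and init: "y t0 = z t0" and "t0 \<le> t"
  shows "y t = z t"
proof -
  obtain M where M: "\<And>s. (M has_real_derivative m s) (at s)"
    using continuous_on_UNIV_antiderivative[OF m_cont] by blast
  define w where "w s = (y s - z s) * exp (M s)" for s
  have "(w has_real_derivative 0) (at s)" if "t0 < s" for s
  proof -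
    have "(w has_real_derivative (- m s * (y s - z s)) * exp (M s) + (y s - z s) * (exp (M s) * m s)) (at s)"
      unfolding w_def using y[OF that] z[OF that]
      by (auto intro!: derivative_eq_intros M simp: algebra_simps)
    then show ?thesis by (simp add: algebra_simps)
  qed
  moreover have "continuous_on {t0..t} w"
  proof -
    have "continuous_on {t0..t} M"
      using M DERIV_isCont by (blast intro: continuous_at_imp_continuous_on)
    moreover have "continuous_on {t0..t} y" "continuous_on {t0..t} z"
      by (auto intro: continuous_on_subset[OF y_cont] continuous_on_subset[OF z_cont])
    ultimately show ?thesis
      unfolding w_def by (intro continuous_intros)
  qed
  ultimately have "w t = w t0"
    using \<open>t0 \<le> t\<close> by (cases "t0 = t") (auto intro: DERIV_isconst_end)
  then show ?thesis
    unfolding w_def using init by simp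
qed

locale uniform_maturation =
  fixes \<beta> \<delta> Vs Vmin T :: real and Va \<mu> tmin tmax :: "real \<Rightarrow> real"
  assumes delta_pos: "0 < \<delta>" and Vs_pos: "0 < Vs" and Vmin_pos: "0 < Vmin"
    and Va_ge: "\<And>t. Vmin \<le> Va t" and Va_cont: "continuous_on UNIV Va"
    and mu_cont: "continuous_on UNIV \<mu>"
    and tmin_lag: "\<And>t. 0 \<le> tmin t \<and> integral {t - tmin t..t} Va = T - Vs * \<delta>"
    and tmax_lag: "\<And>t. 0 \<le> tmax t \<and> integral {t - tmax t..t} Va = T + Vs * \<delta>"
begin

abbreviation window_flux :: "(real \<Rightarrow> real) \<Rightarrow> real \<Rightarrow> real" where
  "window_flux x t \<equiv> (1 / (2 * \<delta>)) *
     (\<beta> * x (t - tmin t) / hatV Va Vs (t - tmin t)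
        * exp (- integral {t - tmin t .. t} (\<lambda>s. \<mu> (x s))) * (Va t / Va (t - tmin t))
    - \<beta> * x (t - tmax t) / hatV Va Vs (t - tmax t)
        * exp (- integral {t - tmax t .. t} (\<lambda>s. \<mu> (x s))) * (Va t / Va (t - tmax t)))"

lemma Va_pos: "0 < Va t"
  using Va_ge[of t] Vmin_pos by linarith

lemma tmin_le_tmax: "tmin t \<le> tmax t"
proof -
  have "integral {t - tmin t..t} Va < integral {t - tmax t..t} Va"
    using tmin_lag[of t] tmax_lag[of t] delta_pos Vs_pos by simp
  then show ?thesis
    using lag_mono[OF Va_cont Va_pos] tmin_lag tmax_lag by blast
qed

lemma AU_eq_memory_integral:
  "AU \<beta> \<delta> Vs Va \<mu> tmin tmax x t =
     (1 / (2 * \<delta>)) * memory_integral (\<lambda>s. \<beta> * x s / hatV Va Vs s) (\<lambda>s. \<mu> (x s)) tmin tmax t"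
  unfolding AU_def memory_integral_def by simp

lemma AU_has_real_derivative:
  assumes x_cont: "continuous_on UNIV x"
  shows "(AU \<beta> \<delta> Vs Va \<mu> tmin tmax x has_real_derivative
           window_flux x t - \<mu> (x t) * AU \<beta> \<delta> Vs Va \<mu> tmin tmax x t) (at t)"
proof -
  have g_cont: "continuous_on UNIV (\<lambda>s. \<beta> * x s / hatV Va Vs s)"
    unfolding hatV_def using Va_pos Vs_pos
    by (auto intro!: continuous_intros x_cont Va_cont simp: less_imp_neq[symmetric])
  have m_cont: "continuous_on UNIV (\<lambda>s. \<mu> (x s))"
    by (rule continuous_on_compose2[OF mu_cont x_cont]) auto
  have window: "0 \<le> tmin s \<and> tmin s \<le> tmax s" for s
    using tmin_lag tmin_le_tmax by blast
  have dmin: "((\<lambda>s. s - tmin s) has_real_derivative Va t / Va (t - tmin t)) (at t)"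
    by (rule lag_has_real_derivative[OF Va_cont Va_ge Vmin_pos]) (use tmin_lag in blast)+
  have dmax: "((\<lambda>s. s - tmax s) has_real_derivative Va t / Va (t - tmax t)) (at t)"
    by (rule lag_has_real_derivative[OF Va_cont Va_ge Vmin_pos]) (use tmax_lag in blast)+
  from DERIV_cmult[OF memory_integral_has_real_derivative[OF g_cont m_cont window dmin dmax],
      of "1 / (2 * \<delta>)"]
  show ?thesis
    unfolding AU_eq_memory_integral[abs_def] by (simp add: algebra_simps)
qed

lemma AU_continuous_on:
  assumes "continuous_on UNIV x"
  shows "continuous_on S (AU \<beta> \<delta> Vs Va \<mu> tmin tmax x)"
  using AU_has_real_derivative[OF assms] DERIV_isCont
  by (blast intro: continuous_at_imp_continuous_on)

lemma AU_history:
  assumes "\<forall>s\<le>t0. x s = \<rho> s"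
  shows "AU \<beta> \<delta> Vs Va \<mu> tmin tmax x t0 = AU \<beta> \<delta> Vs Va \<mu> tmin tmax \<rho> t0"
  unfolding AU_def
proof (intro arg_cong[where f="\<lambda>z. (1 / (2 * \<delta>)) * z"] integral_cong)
  fix \<phi> assume "\<phi> \<in> {tmin t0..tmax t0}"
  then have "0 \<le> \<phi>"
    using tmin_lag[of t0] by auto
  moreover have "integral {t0 - \<phi>..t0} (\<lambda>s. \<mu> (x s)) = integral {t0 - \<phi>..t0} (\<lambda>s. \<mu> (\<rho> s))"
    by (rule integral_cong) (use assms in auto)
  ultimately show "\<beta> * x (t0 - \<phi>) / hatV Va Vs (t0 - \<phi>) * exp (- integral {t0 - \<phi>..t0} (\<lambda>s. \<mu> (x s))) =
      \<beta> * \<rho> (t0 - \<phi>) / hatV Va Vs (t0 - \<phi>) * exp (- integral {t0 - \<phi>..t0} (\<lambda>s. \<mu> (\<rho> s)))"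
    using assms by simp
qed

lemma solves_D_AU_if_solves_U:
  assumes "solves_U F \<gamma> \<mu> \<beta> \<delta> Vs Va tmin tmax t0 \<rho> x"
  shows "solves_D F \<gamma> \<mu> \<beta> \<delta> Vs Va tmin tmax t0 \<rho> x (AU \<beta> \<delta> Vs Va \<mu> tmin tmax x)"
    and "AU \<beta> \<delta> Vs Va \<mu> tmin tmax x t0 = AU \<beta> \<delta> Vs Va \<mu> tmin tmax \<rho> t0"
proof -
  have x_cont: "continuous_on UNIV x" and history: "\<forall>s\<le>t0. x s = \<rho> s"
    using assms unfolding solves_U_def by blast+
  show "solves_D F \<gamma> \<mu> \<beta> \<delta> Vs Va tmin tmax t0 \<rho> x (AU \<beta> \<delta> Vs Va \<mu> tmin tmax x)"
    using assms AU_has_real_derivative[OF x_cont] AU_continuous_on[OF x_cont]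
    unfolding solves_U_def solves_D_def by blast
  show "AU \<beta> \<delta> Vs Va \<mu> tmin tmax x t0 = AU \<beta> \<delta> Vs Va \<mu> tmin tmax \<rho> t0"
    by (rule AU_history[OF history])
qed

lemma solves_U_iff_initial_AU:
  assumes D: "solves_D F \<gamma> \<mu> \<beta> \<delta> Vs Va tmin tmax t0 \<eta> x y"
  shows "(solves_U F \<gamma> \<mu> \<beta> \<delta> Vs Va tmin tmax t0 \<eta> x \<and> (\<forall>t\<ge>t0. y t = AU \<beta> \<delta> Vs Va \<mu> tmin tmax x t))
     \<longleftrightarrow> y t0 = AU \<beta> \<delta> Vs Va \<mu> tmin tmax \<eta> t0"
proof -
  have x_cont: "continuous_on UNIV x" and history: "\<forall>s\<le>t0. x s = \<eta> s"
    using D unfolding solves_D_def by auto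
  have "y t = AU \<beta> \<delta> Vs Va \<mu> tmin tmax x t"
    if "y t0 = AU \<beta> \<delta> Vs Va \<mu> tmin tmax x t0" "t0 \<le> t" for t
  proof (rule linear_ode_solution_unique[where y=y and z="AU \<beta> \<delta> Vs Va \<mu> tmin tmax x"
        and f="window_flux x" and m="\<lambda>s. \<mu> (x s)"])
    show "continuous_on UNIV (\<lambda>s. \<mu> (x s))"
      by (rule continuous_on_compose2[OF mu_cont x_cont]) auto
  qed (use D that AU_has_real_derivative[OF x_cont] AU_continuous_on[OF x_cont]
       in \<open>auto simp: solves_D_def\<close>)
  then show ?thesis
    using D AU_history[OF history] unfolding solves_D_def solves_U_def by auto
qed

end

theorem theorem4p2:
  fixes F :: "real \<Rightarrow> real \<Rightarrow> real" and \<gamma> \<mu> Va tmin tmax :: "real \<Rightarrow> real"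
    and \<beta> \<delta> Vs Vmin Vmax T t0 :: real
  assumes beta_pos: "\<beta> > 0" and delta_pos: "\<delta> > 0" and Vs_pos: "Vs > 0"
    and Vmin_pos: "0 < Vmin"
    and Va_bounds: "\<forall>t. Vmin \<le> Va t \<and> Va t \<le> Vmax"
    and Va_cont: "continuous_on UNIV Va"
    and T_gt: "T > Vs * \<delta>"
    and mu_cont: "continuous_on UNIV \<mu>"
    and tmin_def: "\<forall>t. tmin t \<ge> 0 \<and> integral {t - tmin t .. t} Va = T - Vs * \<delta>"
    and tmax_def: "\<forall>t. tmax t \<ge> 0 \<and> integral {t - tmax t .. t} Va = T + Vs * \<delta>"
  shows
    "(\<forall>\<rho> x. solves_U F \<gamma> \<mu> \<beta> \<delta> Vs Va tmin tmax t0 \<rho> x \<longrightarrow>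
        solves_D F \<gamma> \<mu> \<beta> \<delta> Vs Va tmin tmax t0 \<rho> x (AU \<beta> \<delta> Vs Va \<mu> tmin tmax x) \<and>
        AU \<beta> \<delta> Vs Va \<mu> tmin tmax x t0 =
          (1 / (2 * \<delta>)) * integral {tmin t0 .. tmax t0}
            (\<lambda>\<phi>. \<beta> * \<rho> (t0 - \<phi>) / hatV Va Vs (t0 - \<phi>)
                   * exp (- integral {t0 - \<phi> .. t0} (\<lambda>s. \<mu> (\<rho> s))))) \<and>
     (\<forall>\<eta> x y. solves_D F \<gamma> \<mu> \<beta> \<delta> Vs Va tmin tmax t0 \<eta> x y \<longrightarrow>
        ((solves_U F \<gamma> \<mu> \<beta> \<delta> Vs Va tmin tmax t0 \<eta> x \<and>
          (\<forall>t\<ge>t0. y t = AU \<beta> \<delta> Vs Va \<mu> tmin tmax x t))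
         \<longleftrightarrow>
         y t0 = (1 / (2 * \<delta>)) * integral {tmin t0 .. tmax t0}
            (\<lambda>\<phi>. \<beta> * \<eta> (t0 - \<phi>) / hatV Va Vs (t0 - \<phi>)
                   * exp (- integral {t0 - \<phi> .. t0} (\<lambda>s. \<mu> (\<eta> s))))))"
proof -
  interpret uniform_maturation \<beta> \<delta> Vs Vmin T Va \<mu> tmin tmax
    using assms by unfold_locales auto
  show ?thesis
    using solves_D_AU_if_solves_U[of F \<gamma> t0] solves_U_iff_initial_AU[of F \<gamma> t0]
    unfolding AU_def[of \<beta> \<delta> Vs Va \<mu> tmin tmax _ t0]
    by blast
qed

end
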